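(* Let $K$ be a field, $\nu$ a valuation on $K[x]$, and $\mathbf{Q}\subseteq K[x]$ a set of key polynomials for $\nu$. Then $\mathbf{Q}$ is a complete set for $\nu$ if and only if $\mathbf{Q}$ satisfies (GS1$^*$).
   Context: $\nu:K[x]\to\Gamma\cup\{\infty\}$ is a valuation ($\Gamma$ an ordered abelian group) with $\nu(f)=\infty$ only for $f=0$; $\Gamma'=\Gamma\otimes\mathbb{Q}$. For $k\in\mathbb{N}$, $\partial_k f=\frac{1}{k!}\frac{d^kf}{dx^k}$ (Hasse derivative). For nonconstant $f$, $\epsilon(f)=\max\{(\nu(f)-\nu(\partial_kf))/k\mid 1\le k\le\deg f\}\in\Gamma'$ (terms with $\partial_kf=0$ omitted). A key polynomial is a monic nonconstant $Q\in K[x]$ such that every nonconstant $f\in K[x]$ with $\epsilon(f)\ge\epsilon(Q)$ satisfies $\deg f\ge\deg Q$. For monic nonconstant $Q$, the $Q$-expansion of $f$ is the unique expression $f=f_0+f_1Q+\dots+f_nQ^n$ with each $f_i=0$ or $\deg f_i<\deg Q$, and $\nu_Q(f)=\min_i\nu(f_iQ^i)$. A set $\mathbf{Q}$ of monic nonconstant polynomials is complete for $\nu$ if for every nonconstant $f\in K[x]$ there is $Q\in\mathbf{Q}$ with $\deg Q\le\deg f$ and $\nu_Q(f)=\nu(f)$. For finitely supported $\lambda:\mathbf{Q}\to\mathbb{N}_0$ let $\mathbf{Q}^\lambda=\prod_{\lambda(Q)\neq0}Q^{\lambda(Q)}$. (GS1$^*$): for every $f\in K[x]$ there exist $r\ge0$,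 $a_1,\dots,a_r\in K$ and finitely supported $\lambda_1,\dots,\lambda_r:\mathbf{Q}\to\mathbb{N}_0$ with $f=\sum_{i=1}^ra_i\mathbf{Q}^{\lambda_i}$, $\nu(a_i\mathbf{Q}^{\lambda_i})\ge\nu(f)$ for all $i$, and $\deg Q\le\deg f$ whenever $\lambda_i(Q)\ne0$ for some $i$. *)

theory Defs
  imports "HOL-Computational_Algebra.Polynomial"
begin

text \<open>An element of \<Gamma> \<union> {\<infinity>} is represented as a value of type 'g option,
  with None standing for \<infinity>. The order and addition are extended as usual.\<close>

definition vle :: "'g::linordered_ab_group_add option \<Rightarrow> 'g option \<Rightarrow> bool" where
  "vle x y = (case y of None \<Rightarrow> True
                      | Some b \<Rightarrow> (case x of None \<Rightarrow> False | Some a \<Rightarrow> a \<le> b))"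

definition vadd :: "'g::linordered_ab_group_add option \<Rightarrow> 'g option \<Rightarrow> 'g option" where
  "vadd x y = (case x of None \<Rightarrow> None
                       | Some a \<Rightarrow> (case y of None \<Rightarrow> None | Some b \<Rightarrow> Some (a + b)))"

definition vmin :: "'g::linordered_ab_group_add option \<Rightarrow> 'g option \<Rightarrow> 'g option" where
  "vmin x y = (if vle x y then x else y)"

definition is_valuation :: "('a::field poly \<Rightarrow> 'g::linordered_ab_group_add option) \<Rightarrow> bool" where
  "is_valuation \<nu> \<longleftrightarrow>
     (\<forall>f. \<nu> f = None \<longleftrightarrow> f = 0) \<and>
     (\<forall>f g. \<nu> (f * g) = vadd (\<nu> f) (\<nu> g)) \<and>
     (\<forall>f g. vle (vmin (\<nu> f) (\<nu> g)) (\<nu> (f + g)))"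

text \<open>\<partial>_k f = (1/k!) d^k f / dx^k, written via its coefficients
  (which is the standard Hasse derivative, meaningful in any characteristic):
  \<partial>_k (\<Sum> a_i x^i) = \<Sum> (i choose k) a_i x^(i-k).\<close>

definition hasse_deriv :: "nat \<Rightarrow> 'a::field poly \<Rightarrow> 'a poly" where
  "hasse_deriv k f = (\<Sum>i\<le>degree f. monom (of_nat (i choose k) * coeff f i) (i - k))"

definition nsmul :: "nat \<Rightarrow> 'g::linordered_ab_group_add \<Rightarrow> 'g" where
  "nsmul n a = (\<Sum>_<n. a)"

text \<open>Elements of \<Gamma>' = \<Gamma> \<otimes> \<rat> are represented as formal fractions (a, m) = a/m
  with a \<in> \<Gamma>, m a positive natural; (a,m) \<le> (b,n) in \<Gamma>' iff n a \<le> m b in \<Gamma>.\<close>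
definition qle :: "'g::linordered_ab_group_add \<times> nat \<Rightarrow> 'g \<times> nat \<Rightarrow> bool" where
  "qle p q = (nsmul (snd q) (fst p) \<le> nsmul (snd p) (fst q))"

text \<open>The finite set of quantities (\<nu>(f) - \<nu>(\<partial>_k f))/k, 1 \<le> k \<le> deg f, \<partial>_k f \<noteq> 0,
  whose maximum is \<epsilon>(f).\<close>
definition eps_terms :: "('a::field poly \<Rightarrow> 'g::linordered_ab_group_add option) \<Rightarrow> 'a poly
    \<Rightarrow> ('g \<times> nat) set" where
  "eps_terms \<nu> f = {(the (\<nu> f) - the (\<nu> (hasse_deriv k f)), k) | k.
                      1 \<le> k \<and> k \<le> degree f \<and> hasse_deriv k f \<noteq> 0}"

text \<open>\<epsilon>(g) \<le> \<epsilon>(f) in \<Gamma>': the maximum of eps_terms f dominates every element of eps_terms g.\<close>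
definition eps_le :: "('a::field poly \<Rightarrow> 'g::linordered_ab_group_add option) \<Rightarrow> 'a poly \<Rightarrow> 'a poly \<Rightarrow> bool" where
  "eps_le \<nu> g f = (\<exists>p\<in>eps_terms \<nu> f. \<forall>q\<in>eps_terms \<nu> g. qle q p)"

definition key_polynomial :: "('a::field poly \<Rightarrow> 'g::linordered_ab_group_add option) \<Rightarrow> 'a poly \<Rightarrow> bool" where
  "key_polynomial \<nu> Q \<longleftrightarrow> lead_coeff Q = 1 \<and> degree Q \<ge> 1 \<and>
     (\<forall>f. degree f \<ge> 1 \<longrightarrow> eps_le \<nu> Q f \<longrightarrow> degree f \<ge> degree Q)"

text \<open>The i-th coefficient f_i of the Q-expansion f = \<Sum> f_i Q^i (deg f_i < deg Q).\<close>
definition qexp_coeff :: "'a::field poly \<Rightarrow> 'a poly \<Rightarrow> nat \<Rightarrow> 'a poly" where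
  "qexp_coeff Q f i = (f div Q ^ i) mod Q"

definition nu_Q :: "('a::field poly \<Rightarrow> 'g::linordered_ab_group_add option) \<Rightarrow> 'a poly \<Rightarrow> 'a poly \<Rightarrow> 'g option" where
  "nu_Q \<nu> Q f = (if {i. i \<le> degree f \<and> qexp_coeff Q f i \<noteq> 0} = {} then None
      else Some (Min {the (\<nu> (qexp_coeff Q f i * Q ^ i)) | i. i \<le> degree f \<and> qexp_coeff Q f i \<noteq> 0}))"

definition complete_set :: "('a::field poly \<Rightarrow> 'g::linordered_ab_group_add option) \<Rightarrow> 'a poly set \<Rightarrow> bool" where
  "complete_set \<nu> QS \<longleftrightarrow>
     (\<forall>f. degree f \<ge> 1 \<longrightarrow> (\<exists>Q\<in>QS. degree Q \<le> degree f \<and> nu_Q \<nu> Q f = \<nu> f))"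

definition Qpow :: "('a::field poly \<Rightarrow> nat) \<Rightarrow> 'a poly" where
  "Qpow lam = (\<Prod>Q\<in>{Q. lam Q \<noteq> 0}. Q ^ lam Q)"

definition GS1_star :: "('a::field poly \<Rightarrow> 'g::linordered_ab_group_add option) \<Rightarrow> 'a poly set \<Rightarrow> bool" where
  "GS1_star \<nu> QS \<longleftrightarrow>
     (\<forall>f. \<exists>(r::nat) (a::nat \<Rightarrow> 'a) (lam::nat \<Rightarrow> 'a poly \<Rightarrow> nat).
        (\<forall>i<r. finite {Q. lam i Q \<noteq> 0} \<and> {Q. lam i Q \<noteq> 0} \<subseteq> QS) \<and>
        f = (\<Sum>i<r. smult (a i) (Qpow (lam i))) \<and>
        (\<forall>i<r. vle (\<nu> f) (\<nu> (smult (a i) (Qpow (lam i))))) \<and>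
        (\<forall>i<r. \<forall>Q. lam i Q \<noteq> 0 \<longrightarrow> degree Q \<le> degree f))"

end

theory Submission
  imports Defs
begin

text \<open>
  For a key polynomial \<open>Q\<close>, the truncation \<open>\<nu>\<^sub>Q\<close> is multiplicative: if \<open>deg f, deg g < deg Q\<close>
  and \<open>fg = qQ + r\<close>, then \<open>\<nu>(qQ) \<ge> \<nu>(fg)\<close>. Otherwise, comparing the \<open>k\<close>-th Hasse derivatives
  of both sides, where \<open>k\<close> realises \<open>\<epsilon>(Q)\<close>, the term \<open>q \<partial>\<^sub>k Q\<close> would be the unique term of
  minimal value, because \<open>\<epsilon>(h) < \<epsilon>(Q)\<close> for every \<open>h\<close> of smaller degree.

  If \<open>\<Q>\<close> is complete, pick \<open>Q \<in> \<Q>\<close> with \<open>\<nu>\<^sub>Q(f) = \<nu>(f)\<close> and expand \<open>f = \<Sum> f\<^sub>i Q\<^sup>i\<close>; the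
  coefficients have smaller degree, so induction on the degree yields (GS1*). Conversely, given a
  (GS1*) expression of \<open>f\<close>, take the occurring \<open>Q\<close> of largest degree and, among those, of largest
  value. Every occurring key polynomial \<open>P\<close> then satisfies \<open>\<nu>\<^sub>Q(P) = \<nu>(P)\<close>, so by
  multiplicativity \<open>\<nu>\<^sub>Q(f) \<ge> \<nu>(f)\<close>, while \<open>\<nu>\<^sub>Q \<le> \<nu>\<close> always holds.
\<close>

lemma nsmul_0 [simp]: "nsmul 0 a = 0"
  by (simp add: nsmul_def)

lemma nsmul_zero [simp]: "nsmul n 0 = 0"
  by (simp add: nsmul_def)

lemma nsmul_Suc: "nsmul (Suc n) a = a + nsmul n a"
  by (simp add: nsmul_def)

lemma nsmul_add: "nsmul n (a + b) = nsmul n a + nsmul n b"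
  by (simp add: nsmul_def sum.distrib)

lemma nsmul_add_left: "nsmul (m + n) a = nsmul m a + nsmul n a"
  by (induction m) (simp_all add: nsmul_Suc nsmul_def algebra_simps)

lemma nsmul_mult: "nsmul (m * n) a = nsmul m (nsmul n a)"
  by (induction m) (simp_all add: nsmul_Suc nsmul_add_left)

lemma nsmul_commute: "nsmul m (nsmul n a) = nsmul n (nsmul m a)"
  by (metis nsmul_mult mult.commute)

lemma nsmul_mono: "a \<le> b \<Longrightarrow> nsmul n a \<le> nsmul n b"
  by (simp add: nsmul_def sum_mono)

lemma nsmul_strict_mono: "a < b \<Longrightarrow> 0 < n \<Longrightarrow> nsmul n a < nsmul n b"
  unfolding nsmul_def by (rule sum_strict_mono) auto

lemma nsmul_less_iff: "0 < n \<Longrightarrow> nsmul n a < nsmul n b \<longleftrightarrow> a < b"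
  by (metis nsmul_mono nsmul_strict_mono not_le)

lemma nsmul_max_ratio:
  fixes w :: "nat \<Rightarrow> 'g::linordered_ab_group_add"
  assumes "finite K" "K \<noteq> {}" "\<And>k. k \<in> K \<Longrightarrow> k dvd L"
  obtains k E where "k \<in> K" "nsmul L (w k) = nsmul k E"
    "\<And>j. j \<in> K \<Longrightarrow> nsmul L (w j) \<le> nsmul j E"
proof -
  define E where "E = Max ((\<lambda>k. nsmul (L div k) (w k)) ` K)"
  have scaled: "nsmul L (w j) = nsmul j (nsmul (L div j) (w j))" if "j \<in> K" for j
    using assms(3)[OF that] by (metis dvd_mult_div_cancel nsmul_mult)
  have "E \<in> (\<lambda>k. nsmul (L div k) (w k)) ` K"
    unfolding E_def using assms(1,2) by (intro Max_in) auto
  then obtain k where "k \<in> K" "E = nsmul (L div k) (w k)" by blast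
  moreover have "nsmul L (w j) \<le> nsmul j E" if "j \<in> K" for j
    unfolding scaled[OF that] using assms(1) that by (auto simp: E_def intro: nsmul_mono)
  ultimately show thesis using that scaled by metis
qed

section \<open>Hasse derivatives via the Taylor shift\<close>

lemma const_poly_sum: "[:sum f A:] = (\<Sum>i\<in>A. [:f i:])"
  by (rule poly_eqI) (simp add: coeff_sum coeff_pCons split: nat.split)

lemma map_poly_const_poly_mult:
  "map_poly (\<lambda>c. [:c:]) (p * q) = map_poly (\<lambda>c. [:c:]) p * map_poly (\<lambda>c. [:c:]) (q :: 'a::comm_ring_1 poly)"
  by (rule poly_eqI) (simp add: coeff_map_poly coeff_mult const_poly_sum mult.commute)

lemma map_poly_const_poly_diff:
  "map_poly (\<lambda>c. [:c:]) (p - q) = map_poly (\<lambda>c. [:c:]) p - map_poly (\<lambda>c. [:c:]) (q :: 'a::comm_ring_1 poly)"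
  by (rule poly_eqI) (simp add: coeff_map_poly)

text \<open>\<open>taylor_shift f = f(x + t)\<close>, a polynomial in \<open>t\<close> over \<open>K[x]\<close>.\<close>

definition taylor_shift :: "'a::comm_ring_1 poly \<Rightarrow> 'a poly poly" where
  "taylor_shift f = pcompose (map_poly (\<lambda>c. [:c:]) f) [:[:0, 1:], 1:]"

lemma taylor_shift_mult: "taylor_shift (f * g) = taylor_shift f * taylor_shift g"
  by (simp add: taylor_shift_def map_poly_const_poly_mult pcompose_mult)

lemma taylor_shift_diff: "taylor_shift (f - g) = taylor_shift f - taylor_shift g"
  by (simp add: taylor_shift_def map_poly_const_poly_diff pcompose_diff)

lemma coeff_taylor_shift_power:
  "coeff ([:[:0, 1:], 1:] ^ i) k = monom (of_nat (i choose k)) (i - k :: nat)"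
proof (cases "k \<le> i")
  case True
  then show ?thesis by (simp add: coeff_linear_poly_power monom_altdef of_nat_poly)
next
  case False
  then have "coeff ([:[:0, 1:], 1:] ^ i) k = (0 :: 'a poly)"
    by (intro coeff_eq_0) (simp add: degree_linear_power)
  then show ?thesis using False by (simp add: binomial_eq_0)
qed

lemma coeff_taylor_shift: "coeff (taylor_shift f) k = hasse_deriv k (f :: 'a::field poly)"
proof -
  have "coeff (taylor_shift f) k = (\<Sum>i\<le>degree f. [:coeff f i:] * coeff ([:[:0, 1:], 1:] ^ i) k)"
    by (simp add: taylor_shift_def pcompose_altdef poly_altdef coeff_sum coeff_map_poly degree_map_poly)
  also have "\<dots> = hasse_deriv k f"
    unfolding hasse_deriv_def coeff_taylor_shift_power
    by (intro sum.cong refl) (simp add: smult_monom mult.commute)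
  finally show ?thesis .
qed

lemma hasse_deriv_mult:
  "hasse_deriv k (f * g) = (\<Sum>i\<le>k. hasse_deriv i f * hasse_deriv (k - i) (g :: 'a::field poly))"
  by (simp add: coeff_taylor_shift[symmetric] taylor_shift_mult coeff_mult)

lemma hasse_deriv_diff: "hasse_deriv k (f - g) = hasse_deriv k f - hasse_deriv k (g :: 'a::field poly)"
  by (simp add: coeff_taylor_shift[symmetric] taylor_shift_diff)

lemma hasse_deriv_0_left [simp]: "hasse_deriv 0 f = f"
  by (simp add: hasse_deriv_def poly_as_sum_of_monoms)

lemma hasse_deriv_0_right [simp]: "hasse_deriv k 0 = 0"
  by (simp add: hasse_deriv_def)

lemma le_degree_of_hasse_deriv_nonzero: "hasse_deriv k f \<noteq> 0 \<Longrightarrow> k \<le> degree f"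
  unfolding hasse_deriv_def by (rule ccontr) (auto intro!: sum.neutral simp: binomial_eq_0)

lemma hasse_deriv_degree: "hasse_deriv (degree f) f = [:lead_coeff f:]"
proof -
  have "hasse_deriv (degree f) f
      = (\<Sum>i\<in>{degree f}. monom (of_nat (i choose degree f) * coeff f i) (i - degree f))"
    unfolding hasse_deriv_def by (rule sum.mono_neutral_right) (auto simp: binomial_eq_0)
  then show ?thesis by (simp add: monom_0)
qed

section \<open>\<open>Q\<close>-expansions\<close>

lemma degree_div_add_le:
  fixes f g :: "'a::field poly"
  assumes "f div g \<noteq> 0"
  shows "degree (f div g) + degree g \<le> degree f"
proof -
  have g: "g \<noteq> 0" using assms by auto
  have "degree f = degree (f div g * g)"
  proof (cases "f mod g = 0")
    case True
    then show ?thesis by (metis add_0_right div_mult_mod_eq)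
  next
    case False
    then have "degree (f mod g) < degree (f div g * g)"
      using degree_mod_less[OF g, of f] assms g by (auto simp: degree_mult_eq)
    then show ?thesis
      using degree_add_eq_left[of "f mod g" "f div g * g"] by (simp add: div_mult_mod_eq)
  qed
  then show ?thesis using assms g by (simp add: degree_mult_eq)
qed

lemma qexp_coeff_0: "qexp_coeff Q f 0 = f mod Q"
  by (simp add: qexp_coeff_def)

lemma qexp_coeff_Suc: "qexp_coeff Q f (Suc i) = qexp_coeff Q (f div Q) i"
  by (simp add: qexp_coeff_def poly_div_mult_right)

lemma qexp_coeff_add: "qexp_coeff Q (f + g) i = qexp_coeff Q f i + qexp_coeff Q g i"
  by (simp add: qexp_coeff_def poly_div_add_left poly_mod_add_left)

lemma qexp_coeff_smult: "qexp_coeff Q (smult a f) i = smult a (qexp_coeff Q f i)"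
  by (simp add: qexp_coeff_def div_smult_left mod_smult_left)

lemma qexp_coeff_zero [simp]: "qexp_coeff Q 0 i = 0"
  by (simp add: qexp_coeff_def)

lemma degree_qexp_coeff_less:
  "Q \<noteq> 0 \<Longrightarrow> qexp_coeff Q f i \<noteq> 0 \<Longrightarrow> degree (qexp_coeff Q f i) < degree Q"
  unfolding qexp_coeff_def using degree_mod_less by blast

lemma qexp_coeff_add_mult:
  assumes "degree b < degree Q"
  shows "qexp_coeff Q (b + Q * h) i = (if i = 0 then b else qexp_coeff Q h (i - 1))"
proof -
  have "Q \<noteq> 0" using assms by auto
  then show ?thesis
    using assms by (cases i) (simp_all add: qexp_coeff_0 qexp_coeff_Suc poly_mod_add_left
        poly_div_add_left mod_poly_less div_poly_less)
qed

lemma qexp_coeff_of_degree_less: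
  "degree b < degree Q \<Longrightarrow> qexp_coeff Q b i = (if i = 0 then b else 0)"
  using qexp_coeff_add_mult[of b Q 0 i] by simp

lemma qexp_coeff_mult_of_degree_less:
  assumes "degree b < degree Q" "degree e < degree Q"
  shows "qexp_coeff Q (b * e) i = (if i = 0 then (b * e) mod Q else if i = 1 then (b * e) div Q else 0)"
proof -
  define q where "q = (b * e) div Q"
  define r where "r = (b * e) mod Q"
  have Q0: "Q \<noteq> 0" using assms by auto
  have dr: "degree r < degree Q"
    using degree_mod_less[OF Q0, of "b * e"] assms by (auto simp: r_def)
  have dq: "degree q < degree Q"
    using degree_div_add_le[of "b * e" Q] degree_mult_le[of b e] assms
    by (cases "q = 0") (auto simp: q_def)
  have "b * e = r + Q * q" by (simp add: q_def r_def mult.commute)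
  then have "qexp_coeff Q (b * e) i = (if i = 0 then r else if i = 1 then q else 0)"
    using dr dq by (simp add: qexp_coeff_add_mult qexp_coeff_of_degree_less)
  then show ?thesis by (simp add: q_def r_def)
qed

lemma qexp_coeff_mult_power:
  assumes "1 \<le> degree Q"
  shows "qexp_coeff Q (h * Q ^ m) i = (if i < m then 0 else qexp_coeff Q h (i - m))"
proof (induction m arbitrary: i)
  case (Suc m)
  have "qexp_coeff Q (h * Q ^ Suc m) i = qexp_coeff Q (0 + Q * (h * Q ^ m)) i"
    by (simp add: algebra_simps)
  also have "\<dots> = (if i = 0 then 0 else qexp_coeff Q (h * Q ^ m) (i - 1))"
    using assms by (intro qexp_coeff_add_mult) simp
  finally show ?case using Suc.IH[of "i - 1"] by auto
qed simp

lemma qexp_expansion_upto: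
  "f = (\<Sum>j<n. qexp_coeff Q f j * Q ^ j) + (f div Q ^ n) * Q ^ n"
proof (induction n)
  case (Suc n)
  have "f div Q ^ Suc n = (f div Q ^ n) div Q"
    by (simp only: power_Suc2 poly_div_mult_right)
  then have "f div Q ^ n = qexp_coeff Q f n + (f div Q ^ Suc n) * Q"
    using div_mult_mod_eq[of "f div Q ^ n" Q] by (simp add: qexp_coeff_def add.commute)
  then have "(f div Q ^ n) * Q ^ n = qexp_coeff Q f n * Q ^ n + (f div Q ^ Suc n) * Q ^ Suc n"
    by (simp add: distrib_right power_Suc2 mult.assoc)
  then show ?case using Suc.IH by (simp add: add.assoc)
qed simp

lemma le_degree_power:
  fixes Q :: "'a::idom poly"
  assumes "1 \<le> degree Q"
  shows "n \<le> degree (Q ^ n)"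
proof -
  have "Q \<noteq> 0" using assms by auto
  then show ?thesis using assms by (simp add: degree_power_eq)
qed

lemma qexp_coeff_eq_0_of_degree_less:
  "1 \<le> degree Q \<Longrightarrow> degree f < i \<Longrightarrow> qexp_coeff Q f i = 0"
  using le_degree_power[of Q i] by (simp add: qexp_coeff_def div_poly_less)

lemma qexp_expansion:
  assumes "1 \<le> degree Q"
  shows "f = (\<Sum>j\<le>degree f. qexp_coeff Q f j * Q ^ j)"
proof -
  have "degree f < degree (Q ^ Suc (degree f))"
    using le_degree_power[OF assms, of "Suc (degree f)"] by simp
  then have "f div Q ^ Suc (degree f) = 0" by (simp add: div_poly_less)
  then show ?thesis
    using qexp_expansion_upto[where f = f and n = "Suc (degree f)" and Q = Q] by (simp add: lessThan_Suc_atMost)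
qed

locale poly_valuation =
  fixes \<nu> :: "'a::field poly \<Rightarrow> 'g::linordered_ab_group_add option"
  assumes valuation: "is_valuation \<nu>"
begin

text \<open>\<open>v 0 = the None\<close> is unspecified; all facts about \<open>v f\<close> assume \<open>f \<noteq> 0\<close>.\<close>

definition v :: "'a poly \<Rightarrow> 'g" where
  "v f = the (\<nu> f)"

lemma nu_0 [simp]: "\<nu> 0 = None"
  using valuation unfolding is_valuation_def by blast

lemma nu_eq_Some: "f \<noteq> 0 \<Longrightarrow> \<nu> f = Some (v f)"
  using valuation unfolding is_valuation_def v_def by (cases "\<nu> f") auto

lemma v_mult: "f \<noteq> 0 \<Longrightarrow> g \<noteq> 0 \<Longrightarrow> v (f * g) = v f + v g"
  using valuation nu_eq_Some[of f] nu_eq_Some[of g] nu_eq_Some[of "f * g"]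
  unfolding is_valuation_def by (simp add: vadd_def)

lemma v_add_ge_min:
  assumes "f \<noteq> 0" "g \<noteq> 0" "f + g \<noteq> 0"
  shows "min (v f) (v g) \<le> v (f + g)"
proof -
  have "vle (vmin (\<nu> f) (\<nu> g)) (\<nu> (f + g))"
    using valuation unfolding is_valuation_def by blast
  then show ?thesis using assms nu_eq_Some[of f] nu_eq_Some[of g] nu_eq_Some[of "f + g"]
    by (auto simp: vmin_def vle_def split: if_splits)
qed

lemma v_1 [simp]: "v 1 = 0"
  using v_mult[of 1 1] by simp

lemma v_minus [simp]: "v (- f) = v f"
proof (cases "f = 0")
  case False
  have "v (- 1) = 0" using v_mult[of "- 1" "- 1"] by simp
  then show ?thesis using v_mult[of "- 1" f] False by simp
qed simp

lemma v_add_ge: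
  assumes "f + g \<noteq> 0" "f \<noteq> 0 \<Longrightarrow> c \<le> v f" "g \<noteq> 0 \<Longrightarrow> c \<le> v g"
  shows "c \<le> v (f + g)"
proof (cases "f = 0 \<or> g = 0")
  case True then show ?thesis using assms by auto
next
  case False
  then show ?thesis using assms v_add_ge_min[of f g] by (auto simp: min_le_iff_disj)
qed

lemma v_diff_ge:
  assumes "f - g \<noteq> 0" "f \<noteq> 0 \<Longrightarrow> c \<le> v f" "g \<noteq> 0 \<Longrightarrow> c \<le> v g"
  shows "c \<le> v (f - g)"
  using v_add_ge[of f "- g" c] assms by simp

lemma v_diff_ge_some:
  assumes "f - g \<noteq> 0"
  obtains h where "h \<in> {f, g}" "h \<noteq> 0" "v h \<le> v (f - g)"
proof (cases "f = 0 \<or> g = 0")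
  case True
  then show ?thesis using assms that[of f] that[of g] by auto
next
  case False
  then have "min (v f) (v g) \<le> v (f - g)" using v_add_ge_min[of f "- g"] assms by simp
  then show ?thesis using False that[of f] that[of g] by (auto simp: min_le_iff_disj)
qed

lemma nsmul_v_diff_less:
  assumes "a - b \<noteq> 0" "a \<noteq> 0 \<Longrightarrow> nsmul L (c - v a) < T" "b \<noteq> 0 \<Longrightarrow> nsmul L (c - v b) < T"
  shows "nsmul L (c - v (a - b)) < T"
proof -
  obtain h where h: "h \<in> {a, b}" "h \<noteq> 0" "v h \<le> v (a - b)"
    using assms(1) by (rule v_diff_ge_some)
  then have "nsmul L (c - v (a - b)) \<le> nsmul L (c - v h)" by (simp add: nsmul_mono)
  also have "\<dots> < T" using h assms(2,3) by auto
  finally show ?thesis .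
qed

lemma v_sum_ge_some:
  assumes "finite A" "sum h A \<noteq> 0"
  shows "\<exists>i\<in>A. h i \<noteq> 0 \<and> v (h i) \<le> v (sum h A)"
  using assms
proof (induction A rule: finite_induct)
  case (insert x F)
  show ?case
  proof (cases "h x = 0 \<or> sum h F = 0")
    case True
    then show ?thesis using insert by auto
  next
    case False
    then have "min (v (h x)) (v (sum h F)) \<le> v (sum h (insert x F))"
      using v_add_ge_min[of "h x" "sum h F"] insert by simp
    moreover obtain i where "i \<in> F" "h i \<noteq> 0" "v (h i) \<le> v (sum h F)"
      using insert False by blast
    ultimately show ?thesis using False by (force simp: min_le_iff_disj)
  qed
qed simp

lemma v_sum_ge:
  assumes "finite A" "sum h A \<noteq> 0" "\<And>i. i \<in> A \<Longrightarrow> h i \<noteq> 0 \<Longrightarrow> c \<le> v (h i)"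
  shows "c \<le> v (sum h A)"
  using v_sum_ge_some[OF assms(1,2)] assms(3) by (blast intro: order_trans)

section \<open>The invariant \<open>\<epsilon>\<close> of a key polynomial\<close>

lemma key_polynomial_eps_less:
  assumes key: "key_polynomial \<nu> Q" and deg: "degree h < degree Q"
    and j: "1 \<le> j" "hasse_deriv j h \<noteq> 0"
  obtains i where "1 \<le> i" "i \<le> degree Q" "hasse_deriv i Q \<noteq> 0"
    "nsmul i (v h - v (hasse_deriv j h)) < nsmul j (v Q - v (hasse_deriv i Q))"
proof -
  have "j \<le> degree h" using le_degree_of_hasse_deriv_nonzero[OF j(2)] .
  then have "\<not> eps_le \<nu> Q h"
    using key deg j(1) unfolding key_polynomial_def by force
  moreover have "(v h - v (hasse_deriv j h), j) \<in> eps_terms \<nu> h"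
    unfolding eps_terms_def v_def using j \<open>j \<le> degree h\<close> by blast
  ultimately obtain i where "1 \<le> i" "i \<le> degree Q" "hasse_deriv i Q \<noteq> 0"
    "\<not> qle (v Q - v (hasse_deriv i Q), i) (v h - v (hasse_deriv j h), j)"
    unfolding eps_le_def eps_terms_def v_def by auto
  then show thesis using that unfolding qle_def by (simp add: not_le)
qed

end

text \<open>\<open>E / L\<close> plays the role of \<open>\<epsilon>(Q) \<in> \<Gamma>'\<close>: the values of \<open>\<epsilon>\<close> are fractions with
  denominators at most \<open>deg Q\<close>, and scaling them by \<open>L\<close> keeps all comparisons inside \<open>\<Gamma>\<close>.\<close>

locale eps_scaled = poly_valuation \<nu>
  for \<nu> :: "'a::field poly \<Rightarrow> 'g::linordered_ab_group_add option" +
  fixes Q :: "'a poly" and L :: nat and E :: 'g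
  assumes L_pos: "0 < L"
    and hasse_bound_Q: "hasse_deriv j Q \<noteq> 0 \<Longrightarrow> nsmul L (v Q - v (hasse_deriv j Q)) \<le> nsmul j E"
    and hasse_bound_small: "degree h < degree Q \<Longrightarrow> 1 \<le> j \<Longrightarrow> hasse_deriv j h \<noteq> 0 \<Longrightarrow>
       nsmul L (v h - v (hasse_deriv j h)) < nsmul j E"

context poly_valuation
begin

lemma key_polynomial_eps_scaled:
  assumes key: "key_polynomial \<nu> Q"
  obtains L k E where "eps_scaled \<nu> Q L E" "1 \<le> k" "hasse_deriv k Q \<noteq> 0"
    "nsmul L (v Q - v (hasse_deriv k Q)) = nsmul k E"
proof -
  define L :: nat where "L = fact (degree Q)"
  define K where "K = {k. 1 \<le> k \<and> k \<le> degree Q \<and> hasse_deriv k Q \<noteq> 0}"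
  have "degree Q \<in> K"
    using key hasse_deriv_degree[of Q] unfolding K_def key_polynomial_def by simp
  then obtain k E where k: "k \<in> K" "nsmul L (v Q - v (hasse_deriv k Q)) = nsmul k E"
    and bound: "\<And>j. j \<in> K \<Longrightarrow> nsmul L (v Q - v (hasse_deriv j Q)) \<le> nsmul j E"
    using nsmul_max_ratio[of K L "\<lambda>j. v Q - v (hasse_deriv j Q)"]
    unfolding K_def L_def by (auto simp: dvd_fact)
  have bound_Q: "nsmul L (v Q - v (hasse_deriv j Q)) \<le> nsmul j E" if "hasse_deriv j Q \<noteq> 0" for j
    using bound[of j] that le_degree_of_hasse_deriv_nonzero[OF that]
    by (cases "j = 0") (auto simp: K_def)
  have "nsmul L (v h - v (hasse_deriv j h)) < nsmul j E"
    if small: "degree h < degree Q" "1 \<le> j" "hasse_deriv j h \<noteq> 0" for h j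
  proof -
    obtain i where i: "1 \<le> i" "i \<le> degree Q" "hasse_deriv i Q \<noteq> 0"
      and less: "nsmul i (v h - v (hasse_deriv j h)) < nsmul j (v Q - v (hasse_deriv i Q))"
      using key_polynomial_eps_less[OF key small] .
    have "nsmul i (nsmul L (v h - v (hasse_deriv j h))) < nsmul L (nsmul j (v Q - v (hasse_deriv i Q)))"
      using nsmul_strict_mono[OF less, of L] by (simp add: L_def nsmul_commute)
    also have "\<dots> \<le> nsmul i (nsmul j E)"
      using nsmul_mono[OF bound_Q[OF i(3)], of j] by (simp add: nsmul_commute)
    finally show ?thesis using i(1) by (simp add: nsmul_less_iff)
  qed
  then have "eps_scaled \<nu> Q L E"
    using bound_Q by unfold_locales (auto simp: L_def)
  then show thesis using that k by (auto simp: K_def)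
qed

end

context eps_scaled
begin

lemma hasse_bound_small_le:
  "degree h < degree Q \<Longrightarrow> hasse_deriv j h \<noteq> 0 \<Longrightarrow> nsmul L (v h - v (hasse_deriv j h)) \<le> nsmul j E"
  using hasse_bound_small[of h j] by (cases "j = 0") auto

lemma hasse_deriv_mult_bound:
  assumes "f \<noteq> 0" "g \<noteq> 0" "degree f < degree Q" "degree g < degree Q"
    and "V < v (f * g)" and nz: "hasse_deriv k (f * g) \<noteq> 0"
  shows "nsmul L (V - v (hasse_deriv k (f * g))) < nsmul k E"
proof -
  obtain i where i: "i \<le> k" "hasse_deriv i f * hasse_deriv (k - i) g \<noteq> 0"
    and le: "v (hasse_deriv i f * hasse_deriv (k - i) g) \<le> v (hasse_deriv k (f * g))"
    using v_sum_ge_some[of "{..k}" "\<lambda>i. hasse_deriv i f * hasse_deriv (k - i) g"] nz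
    by (auto simp: hasse_deriv_mult)
  have df: "hasse_deriv i f \<noteq> 0" and dg: "hasse_deriv (k - i) g \<noteq> 0" using i(2) by auto
  have "nsmul L (V - v (hasse_deriv k (f * g)))
      \<le> nsmul L ((V - v (f * g)) + (v f - v (hasse_deriv i f)) + (v g - v (hasse_deriv (k - i) g)))"
    using le df dg assms(1,2) by (intro nsmul_mono) (simp add: v_mult algebra_simps)
  also have "\<dots> < 0 + nsmul i E + nsmul (k - i) E"
    unfolding nsmul_add using assms df dg L_pos
    by (intro add_less_le_mono hasse_bound_small_le) (auto intro: nsmul_strict_mono[of _ 0, simplified])
  also have "\<dots> = nsmul k E" using i(1) by (simp add: nsmul_add_left[symmetric])
  finally show ?thesis .
qed

text \<open>The difference is the Leibniz tail \<open>\<Sum>\<^sub>i\<^sub>\<ge>\<^sub>1 \<partial>\<^sub>i q \<partial>\<^sub>k\<^sub>-\<^sub>i Q\<close>; the strict bound comes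
  from \<open>\<epsilon>(q) < \<epsilon>(Q)\<close>.\<close>

lemma hasse_deriv_mult_Q_bound:
  assumes "q \<noteq> 0" "degree q < degree Q"
    and nz: "hasse_deriv k (q * Q) - q * hasse_deriv k Q \<noteq> 0"
  shows "nsmul L (v (q * Q) - v (hasse_deriv k (q * Q) - q * hasse_deriv k Q)) < nsmul k E"
proof -
  have "{..k} = insert 0 {1..k}" by auto
  then have tail: "hasse_deriv k (q * Q) - q * hasse_deriv k Q
      = (\<Sum>i\<in>{1..k}. hasse_deriv i q * hasse_deriv (k - i) Q)"
    by (simp add: hasse_deriv_mult)
  obtain i where i: "1 \<le> i" "i \<le> k" "hasse_deriv i q * hasse_deriv (k - i) Q \<noteq> 0"
    and le: "v (hasse_deriv i q * hasse_deriv (k - i) Q) \<le> v (hasse_deriv k (q * Q) - q * hasse_deriv k Q)"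
    using v_sum_ge_some[of "{1..k}" "\<lambda>i. hasse_deriv i q * hasse_deriv (k - i) Q"] nz
    unfolding tail by auto
  have dq: "hasse_deriv i q \<noteq> 0" and dQ: "hasse_deriv (k - i) Q \<noteq> 0" using i(3) by auto
  have Q: "Q \<noteq> 0" using dQ by auto
  have "nsmul L (v (q * Q) - v (hasse_deriv k (q * Q) - q * hasse_deriv k Q))
      \<le> nsmul L ((v q - v (hasse_deriv i q)) + (v Q - v (hasse_deriv (k - i) Q)))"
    using le dq dQ Q assms(1) by (intro nsmul_mono) (simp add: v_mult algebra_simps)
  also have "\<dots> < nsmul i E + nsmul (k - i) E"
    unfolding nsmul_add using assms i(1) dq dQ
    by (intro add_less_le_mono hasse_bound_small hasse_bound_Q)
  also have "\<dots> = nsmul k E" using i(2) by (simp add: nsmul_add_left[symmetric])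
  finally show ?thesis .
qed

text \<open>Assuming \<open>\<nu>(qQ) < \<nu>(fg)\<close>, every term of \<open>\<partial>\<^sub>k(qQ) = \<partial>\<^sub>k(fg) - \<partial>\<^sub>k r\<close> and of the Leibniz
  tail lies strictly above \<open>\<nu>(qQ) - k\<epsilon>(Q)\<close>, while \<open>q \<partial>\<^sub>k Q\<close> lies exactly there.\<close>

lemma v_mult_le_div_mult:
  assumes k: "1 \<le> k" "hasse_deriv k Q \<noteq> 0" "nsmul L (v Q - v (hasse_deriv k Q)) = nsmul k E"
    and fg: "f \<noteq> 0" "g \<noteq> 0" "degree f < degree Q" "degree g < degree Q"
    and q: "(f * g) div Q \<noteq> 0"
  shows "v (f * g) \<le> v ((f * g) div Q * Q)"
proof (rule ccontr)
  define q where "q = (f * g) div Q"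
  define r where "r = (f * g) mod Q"
  assume "\<not> ?thesis"
  then have V: "v (q * Q) < v (f * g)" by (simp add: q_def)
  define P where "P h \<longleftrightarrow> h \<noteq> 0 \<longrightarrow> nsmul L (v (q * Q) - v h) < nsmul k E" for h
  have P_diff: "P (a - b)" if "P a" "P b" for a b
    using that nsmul_v_diff_less[where a = a and b = b and L = L and c = "v (q * Q)" and T = "nsmul k E"]
    unfolding P_def by blast
  have Q: "Q \<noteq> 0" and q0: "q \<noteq> 0" using q by (auto simp: q_def)
  have dq: "degree q < degree Q"
    using degree_div_add_le[OF q] degree_mult_le[of f g] fg(3,4) by (simp add: q_def)
  have r: "r = f * g - q * Q" by (simp add: q_def r_def minus_div_mult_eq_mod)
  have "P (hasse_deriv k (f * g))"
    unfolding P_def using hasse_deriv_mult_bound[OF fg V] by blast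
  moreover have "P (hasse_deriv k r)"
    unfolding P_def
  proof (intro impI)
    assume nz: "hasse_deriv k r \<noteq> 0"
    then have "r \<noteq> 0" by auto
    then have "v (q * Q) \<le> v r" unfolding r using V by (intro v_diff_ge) auto
    then have "nsmul L (v (q * Q) - v (hasse_deriv k r)) \<le> nsmul L (v r - v (hasse_deriv k r))"
      by (simp add: nsmul_mono)
    also have "\<dots> < nsmul k E"
      using hasse_bound_small[OF _ k(1) nz] degree_mod_less[OF Q, of "f * g"] \<open>r \<noteq> 0\<close>
      by (simp add: r_def)
    finally show "nsmul L (v (q * Q) - v (hasse_deriv k r)) < nsmul k E" .
  qed
  ultimately have "P (hasse_deriv k (q * Q))"
    using P_diff[of "hasse_deriv k (f * g)" "hasse_deriv k r"] by (simp add: r hasse_deriv_diff)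
  moreover have "P (hasse_deriv k (q * Q) - q * hasse_deriv k Q)"
    unfolding P_def using hasse_deriv_mult_Q_bound[OF q0 dq] by blast
  ultimately have "P (q * hasse_deriv k Q)"
    using P_diff[of "hasse_deriv k (q * Q)" "hasse_deriv k (q * Q) - q * hasse_deriv k Q"] by simp
  moreover have "v (q * Q) - v (q * hasse_deriv k Q) = v Q - v (hasse_deriv k Q)"
    using q0 Q k(2) by (simp add: v_mult)
  ultimately show False using q0 k(2,3) unfolding P_def by simp
qed

end

section \<open>Multiplicativity of \<open>\<nu>\<^sub>Q\<close>\<close>

context poly_valuation
begin

lemma key_polynomial_v_mult_le:
  assumes key: "key_polynomial \<nu> Q"
    and fg: "f \<noteq> 0" "g \<noteq> 0" "degree f < degree Q" "degree g < degree Q"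
    and q: "(f * g) div Q \<noteq> 0"
  shows "v (f * g) \<le> v ((f * g) div Q * Q)"
proof -
  obtain L k E where "eps_scaled \<nu> Q L E" "1 \<le> k" "hasse_deriv k Q \<noteq> 0"
    "nsmul L (v Q - v (hasse_deriv k Q)) = nsmul k E"
    using key_polynomial_eps_scaled[OF key] .
  then show ?thesis using eps_scaled.v_mult_le_div_mult fg q by blast
qed

text \<open>\<open>nu_Q_ge Q c h\<close> says \<open>c \<le> \<nu>\<^sub>Q(h)\<close>, including the case \<open>h = 0\<close>.\<close>

definition nu_Q_ge :: "'a poly \<Rightarrow> 'g \<Rightarrow> 'a poly \<Rightarrow> bool" where
  "nu_Q_ge Q c h \<longleftrightarrow> (\<forall>i. qexp_coeff Q h i \<noteq> 0 \<longrightarrow> c \<le> v (qexp_coeff Q h i * Q ^ i))"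

lemma nu_Q_ge_0: "nu_Q_ge Q c 0"
  by (simp add: nu_Q_ge_def)

lemma nu_Q_ge_mono: "nu_Q_ge Q c h \<Longrightarrow> c' \<le> c \<Longrightarrow> nu_Q_ge Q c' h"
  unfolding nu_Q_ge_def by (meson order_trans)

lemma nu_Q_ge_add:
  assumes "nu_Q_ge Q c f" "nu_Q_ge Q c g" "Q \<noteq> 0"
  shows "nu_Q_ge Q c (f + g)"
  unfolding nu_Q_ge_def
proof (intro allI impI)
  fix i assume nz: "qexp_coeff Q (f + g) i \<noteq> 0"
  have "qexp_coeff Q (f + g) i * Q ^ i = qexp_coeff Q f i * Q ^ i + qexp_coeff Q g i * Q ^ i"
    by (simp add: qexp_coeff_add distrib_right)
  moreover have "qexp_coeff Q (f + g) i * Q ^ i \<noteq> 0" using nz assms(3) by simp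
  ultimately show "c \<le> v (qexp_coeff Q (f + g) i * Q ^ i)"
    using assms(1,2) unfolding nu_Q_ge_def by (auto intro!: v_add_ge)
qed

lemma nu_Q_ge_sum:
  "Q \<noteq> 0 \<Longrightarrow> (\<And>i. i \<in> A \<Longrightarrow> nu_Q_ge Q c (h i)) \<Longrightarrow> nu_Q_ge Q c (sum h A)"
  by (induction A rule: infinite_finite_induct) (auto intro: nu_Q_ge_add nu_Q_ge_0)

lemma nu_Q_ge_sum_list:
  "Q \<noteq> 0 \<Longrightarrow> (\<And>p. p \<in> set ps \<Longrightarrow> nu_Q_ge Q c p) \<Longrightarrow> nu_Q_ge Q c (sum_list ps)"
  by (induction ps) (auto intro: nu_Q_ge_add nu_Q_ge_0)

lemma nu_Q_ge_smult:
  assumes "a \<noteq> 0" "nu_Q_ge Q c h" "Q \<noteq> 0"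
  shows "nu_Q_ge Q (v [:a:] + c) (smult a h)"
  unfolding nu_Q_ge_def
proof (intro allI impI)
  fix i assume "qexp_coeff Q (smult a h) i \<noteq> 0"
  then have nz: "qexp_coeff Q h i \<noteq> 0" by (simp add: qexp_coeff_smult)
  have "v (qexp_coeff Q (smult a h) i * Q ^ i) = v ([:a:] * (qexp_coeff Q h i * Q ^ i))"
    by (simp add: qexp_coeff_smult)
  also have "\<dots> = v [:a:] + v (qexp_coeff Q h i * Q ^ i)"
    using assms nz by (intro v_mult) auto
  finally show "v [:a:] + c \<le> v (qexp_coeff Q (smult a h) i * Q ^ i)"
    using assms(2) nz by (simp add: nu_Q_ge_def)
qed

lemma nu_Q_ge_of_degree_less: "degree P < degree Q \<Longrightarrow> nu_Q_ge Q (v P) P"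
  by (simp add: nu_Q_ge_def qexp_coeff_of_degree_less)

lemma nu_Q_eq_iff_nu_Q_ge:
  assumes Q: "1 \<le> degree Q" and f: "f \<noteq> 0"
  shows "nu_Q \<nu> Q f = \<nu> f \<longleftrightarrow> nu_Q_ge Q (v f) f"
proof -
  define I where "I = {i. i \<le> degree f \<and> qexp_coeff Q f i \<noteq> 0}"
  define M where "M = (\<lambda>i. v (qexp_coeff Q f i * Q ^ i)) ` I"
  have expansion: "f = (\<Sum>j\<le>degree f. qexp_coeff Q f j * Q ^ j)"
    by (rule qexp_expansion[OF Q])
  have "I \<noteq> {}"
  proof
    assume "I = {}"
    then have "(\<Sum>j\<le>degree f. qexp_coeff Q f j * Q ^ j) = 0" by (auto simp: I_def)
    then show False using expansion f by simp
  qed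
  then have M: "finite M" "M \<noteq> {}" by (auto simp: M_def I_def)
  have nu_Q: "nu_Q \<nu> Q f = Some (Min M)"
    using \<open>I \<noteq> {}\<close> unfolding nu_Q_def I_def M_def v_def
    by (simp add: setcompr_eq_image)
  have "Min M \<le> v f"
    by (subst expansion, rule v_sum_ge)
       (use expansion f M in \<open>auto simp: M_def I_def\<close>)
  then have "nu_Q \<nu> Q f = \<nu> f \<longleftrightarrow> v f \<le> Min M"
    by (auto simp: nu_Q nu_eq_Some[OF f])
  also have "\<dots> \<longleftrightarrow> (\<forall>m\<in>M. v f \<le> m)"
    using M by simp
  also have "\<dots> \<longleftrightarrow> nu_Q_ge Q (v f) f"
    using qexp_coeff_eq_0_of_degree_less[OF Q, of f]
    by (auto simp: M_def I_def nu_Q_ge_def not_le[symmetric])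
  finally show ?thesis .
qed

lemma nu_Q_ge_mult_of_degree_less:
  assumes key: "key_polynomial \<nu> Q"
    and be: "b \<noteq> 0" "e \<noteq> 0" "degree b < degree Q" "degree e < degree Q"
  shows "nu_Q_ge Q (v (b * e) + v (Q ^ m)) (b * e * Q ^ m)"
proof -
  define q where "q = (b * e) div Q"
  define r where "r = (b * e) mod Q"
  have Q: "1 \<le> degree Q" using key unfolding key_polynomial_def by auto
  then have Q0: "Q \<noteq> 0" by auto
  have coeff: "qexp_coeff Q (b * e) i = (if i = 0 then r else if i = 1 then q else 0)" for i
    using qexp_coeff_mult_of_degree_less[OF be(3,4)] by (simp add: q_def r_def)
  have vqQ: "v (b * e) \<le> v (q * Q)" if "q \<noteq> 0"
    using key_polynomial_v_mult_le[OF key be] that by (simp add: q_def)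
  have vr: "v (b * e) \<le> v r" if "r \<noteq> 0"
  proof -
    have "r = b * e - q * Q" by (simp add: q_def r_def minus_div_mult_eq_mod)
    then show ?thesis using that vqQ by (auto intro!: v_diff_ge)
  qed
  show ?thesis
    unfolding nu_Q_ge_def qexp_coeff_mult_power[OF Q] coeff
  proof (intro allI impI)
    fix i
    assume nz: "(if i < m then 0 else if i - m = 0 then r else if i - m = 1 then q else 0) \<noteq> 0"
    then consider "i = m" "r \<noteq> 0" | "i = Suc m" "q \<noteq> 0"
      by (cases "i < m"; cases "i - m = 0"; cases "i - m = 1") auto
    then show "v (b * e) + v (Q ^ m)
        \<le> v ((if i < m then 0 else if i - m = 0 then r else if i - m = 1 then q else 0) * Q ^ i)"
    proof cases
      case 1
      then show ?thesis using vr Q0 by (simp add: v_mult)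
    next
      case 2
      then have "v (q * Q ^ i) = v (q * Q) + v (Q ^ m)"
        using Q0 by (simp add: v_mult mult.assoc)
      then show ?thesis using vqQ 2 by simp
    qed
  qed
qed

lemma nu_Q_ge_mult:
  assumes key: "key_polynomial \<nu> Q"
    and g: "nu_Q_ge Q c g" and h: "nu_Q_ge Q d h"
  shows "nu_Q_ge Q (c + d) (g * h)"
proof -
  have Q: "1 \<le> degree Q" using key unfolding key_polynomial_def by auto
  then have Q0: "Q \<noteq> 0" by auto
  have "g * h = (\<Sum>i\<le>degree g. qexp_coeff Q g i * Q ^ i) * (\<Sum>j\<le>degree h. qexp_coeff Q h j * Q ^ j)"
    using qexp_expansion[OF Q, of g] qexp_expansion[OF Q, of h] by simp
  also have "\<dots> = (\<Sum>i\<le>degree g. \<Sum>j\<le>degree h. (qexp_coeff Q g i * Q ^ i) * (qexp_coeff Q h j * Q ^ j))"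
    by (rule sum_product)
  finally have expand: "g * h = \<dots>" .
  have "nu_Q_ge Q (c + d) (b * Q ^ i * (e * Q ^ j))"
    if b: "b = qexp_coeff Q g i" and e: "e = qexp_coeff Q h j" for i j b e
  proof (cases "b = 0 \<or> e = 0")
    case True
    then show ?thesis by (auto simp: nu_Q_ge_0)
  next
    case False
    then have "degree b < degree Q" "degree e < degree Q"
      using degree_qexp_coeff_less[OF Q0] b e by auto
    note small = nu_Q_ge_mult_of_degree_less[OF key _ _ this, of "i + j"]
    have "c + d \<le> v (b * Q ^ i) + v (e * Q ^ j)"
      using g h False b e by (intro add_mono) (auto simp: nu_Q_ge_def)
    also have "\<dots> = v (b * e) + v (Q ^ (i + j))"
      using False Q0 by (simp add: v_mult power_add algebra_simps)
    finally show ?thesis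
      using nu_Q_ge_mono[OF small] False by (simp add: power_add algebra_simps)
  qed
  then show ?thesis
    unfolding expand using Q0 by (intro nu_Q_ge_sum) auto
qed

lemma nu_Q_ge_prod_power:
  assumes key: "key_polynomial \<nu> Q" and "finite A"
    and base: "\<And>P. P \<in> A \<Longrightarrow> P \<noteq> 0 \<and> nu_Q_ge Q (v P) P"
  shows "nu_Q_ge Q (v (\<Prod>P\<in>A. P ^ lam P)) (\<Prod>P\<in>A. P ^ lam P)"
  using \<open>finite A\<close> base
proof (induction A rule: finite_induct)
  case empty
  show ?case using key by (intro nu_Q_ge_of_degree_less) (simp add: key_polynomial_def)
next
  case (insert P A)
  have P: "P \<noteq> 0" "nu_Q_ge Q (v P) P" using insert.prems by auto
  have "nu_Q_ge Q (v (P ^ n)) (P ^ n)" for n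
  proof (induction n)
    case 0
    show ?case using key nu_Q_ge_of_degree_less[of 1 Q] by (simp add: key_polynomial_def)
  next
    case (Suc n)
    then show ?case using nu_Q_ge_mult[OF key P(2) Suc.IH] P(1) by (simp add: v_mult)
  qed
  moreover have "(\<Prod>P\<in>A. P ^ lam P) \<noteq> 0" using insert.prems by (auto simp: prod_zero_iff insert.hyps)
  ultimately show ?case
    using nu_Q_ge_mult[OF key _ insert.IH] insert P(1) by (simp add: v_mult)
qed

lemma nu_Q_ge_of_monic_same_degree:
  assumes Q: "1 \<le> degree Q" "lead_coeff Q = 1"
    and P: "degree P = degree Q" "lead_coeff P = 1" "v P \<le> v Q"
  shows "nu_Q_ge Q (v P) P"
proof -
  have "degree (P - Q) < degree Q"
  proof (cases "P - Q = 0")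
    case False
    have "degree (P - Q) \<le> degree Q" using degree_diff_le_max[of P Q] P(1) by simp
    moreover have "coeff (P - Q) (degree Q) = 0" using Q(2) P(1,2) by simp
    ultimately show ?thesis using False by (metis leading_coeff_0_iff le_neq_implies_less)
  qed (use Q in simp)
  then have "qexp_coeff Q ((P - Q) + Q * 1) i = (if i = 0 then P - Q else qexp_coeff Q 1 (i - 1))" for i
    by (rule qexp_coeff_add_mult)
  then have "qexp_coeff Q P i = (if i = 0 then P - Q else if i = 1 then 1 else 0)" for i
    using Q(1) qexp_coeff_of_degree_less[of 1 Q "i - 1"] by auto
  moreover have "v P \<le> v (P - Q)" if "P - Q \<noteq> 0"
    using that P(3) by (intro v_diff_ge) auto
  ultimately show ?thesis using P(3) by (auto simp: nu_Q_ge_def)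
qed

end

section \<open>Expressions of type (GS1*)\<close>

lemma Qpow_eq_prod_superset:
  assumes "finite U" "{Q. lam Q \<noteq> 0} \<subseteq> U"
  shows "Qpow lam = (\<Prod>Q\<in>U. Q ^ lam Q)"
  unfolding Qpow_def using assms by (intro prod.mono_neutral_left) auto

lemma Qpow_update:
  assumes "finite {Q. lam Q \<noteq> 0}"
  shows "Qpow (lam(P := lam P + i)) = Qpow lam * P ^ i"
proof -
  define U where "U = insert P {Q. lam Q \<noteq> 0}"
  have U: "finite U" "P \<in> U" using assms by (auto simp: U_def)
  have "Qpow (lam(P := lam P + i)) = (\<Prod>Q\<in>U. Q ^ (lam(P := lam P + i)) Q)"
    using U by (intro Qpow_eq_prod_superset) (auto simp: U_def)
  also have "\<dots> = P ^ i * (P ^ lam P * (\<Prod>Q\<in>U - {P}. Q ^ lam Q))"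
    using U by (simp add: prod.remove power_add mult_ac)
  also have "P ^ lam P * (\<Prod>Q\<in>U - {P}. Q ^ lam Q) = (\<Prod>Q\<in>U. Q ^ lam Q)"
    using U by (simp add: prod.remove)
  also have "\<dots> = Qpow lam"
    using U by (intro Qpow_eq_prod_superset[symmetric]) (auto simp: U_def)
  finally show ?thesis by (simp only: mult.commute)
qed

fun gs_term :: "'a::field \<times> ('a poly \<Rightarrow> nat) \<Rightarrow> 'a poly" where
  "gs_term (a, lam) = smult a (Qpow lam)"

context poly_valuation
begin

fun gs_admissible :: "'a poly set \<Rightarrow> 'g \<Rightarrow> nat \<Rightarrow> 'a \<times> ('a poly \<Rightarrow> nat) \<Rightarrow> bool" where
  "gs_admissible QS c d (a, lam) \<longleftrightarrow>
     finite {Q. lam Q \<noteq> 0} \<and> {Q. lam Q \<noteq> 0} \<subseteq> QS \<and> (\<forall>Q. lam Q \<noteq> 0 \<longrightarrow> degree Q \<le> d) \<and>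
     (gs_term (a, lam) \<noteq> 0 \<longrightarrow> c \<le> v (gs_term (a, lam)))"

text \<open>For \<open>f \<noteq> 0\<close>, (GS1*) says \<open>gs_expansion QS (v f) (degree f) f\<close>. The terms
  \<open>a \<Q>\<^sup>\<lambda>\<close> are kept in a list so that expressions can be concatenated.\<close>

definition gs_expansion :: "'a poly set \<Rightarrow> 'g \<Rightarrow> nat \<Rightarrow> 'a poly \<Rightarrow> bool" where
  "gs_expansion QS c d f \<longleftrightarrow>
     (\<exists>ts. (\<forall>t\<in>set ts. gs_admissible QS c d t) \<and> f = sum_list (map gs_term ts))"

lemma nu_Q_ge_gs_term:
  assumes key: "key_polynomial \<nu> Q" and fin: "finite {P. lam P \<noteq> 0}"
    and base: "\<And>P. lam P \<noteq> 0 \<Longrightarrow> P \<noteq> 0 \<and> nu_Q_ge Q (v P) P"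
    and nz: "gs_term (a, lam) \<noteq> 0"
  shows "nu_Q_ge Q (v (gs_term (a, lam))) (gs_term (a, lam))"
proof -
  have Q0: "Q \<noteq> 0" using key by (auto simp: key_polynomial_def)
  have "nu_Q_ge Q (v (Qpow lam)) (Qpow lam)"
    unfolding Qpow_def using fin base by (intro nu_Q_ge_prod_power[OF key]) auto
  moreover have "v (gs_term (a, lam)) = v [:a:] + v (Qpow lam)"
    using v_mult[of "[:a:]" "Qpow lam"] nz by simp
  ultimately show ?thesis using nz nu_Q_ge_smult[of a Q] Q0 by fastforce
qed

lemma nu_Q_ge_sum_gs_terms:
  assumes key: "key_polynomial \<nu> Q" and ts: "\<forall>t\<in>set ts. gs_admissible QS c d t"
    and base: "\<And>t P. t \<in> set ts \<Longrightarrow> snd t P \<noteq> 0 \<Longrightarrow> P \<noteq> 0 \<and> nu_Q_ge Q (v P) P"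
  shows "nu_Q_ge Q c (sum_list (map gs_term ts))"
proof -
  have "nu_Q_ge Q c (gs_term (a, lam))" if t: "(a, lam) \<in> set ts" for a lam
  proof (cases "gs_term (a, lam) = 0")
    case True
    then show ?thesis by (simp only: nu_Q_ge_0)
  next
    case False
    have "gs_admissible QS c d (a, lam)" using ts t by blast
    then show ?thesis
      using nu_Q_ge_gs_term[OF key _ _ False] base[OF t] nu_Q_ge_mono False
      by (auto simp del: gs_term.simps)
  qed
  moreover have "Q \<noteq> 0" using key by (auto simp: key_polynomial_def)
  ultimately show ?thesis by (intro nu_Q_ge_sum_list) (auto simp del: gs_term.simps)
qed

lemma gs_expansion_0: "gs_expansion QS c d 0"
  unfolding gs_expansion_def by (rule exI[of _ "[]"]) simp

lemma gs_expansion_add: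
  "gs_expansion QS c d f \<Longrightarrow> gs_expansion QS c d g \<Longrightarrow> gs_expansion QS c d (f + g)"
  unfolding gs_expansion_def by (metis (no_types, lifting) Un_iff map_append set_append sum_list_append)

lemma gs_expansion_sum:
  "(\<And>i. i \<in> A \<Longrightarrow> gs_expansion QS c d (h i)) \<Longrightarrow> gs_expansion QS c d (sum h A)"
  by (induction A rule: infinite_finite_induct) (auto intro: gs_expansion_add gs_expansion_0)

lemma gs_expansion_mono:
  assumes "gs_expansion QS c d f" "c' \<le> c" "d \<le> d'"
  shows "gs_expansion QS c' d' f"
proof -
  have "gs_admissible QS c' d' t" if "gs_admissible QS c d t" for t
    using that assms(2,3) by (cases t) (auto intro: order_trans)
  then show ?thesis using assms(1) unfolding gs_expansion_def by blast
qed

lemma gs_admissible_mult_power: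
  assumes "gs_admissible QS c d (a, lam)" "P \<in> QS" "P \<noteq> 0"
  shows "gs_admissible QS (c + v (P ^ i)) (max d (degree P)) (a, lam(P := lam P + i))"
    and "gs_term (a, lam(P := lam P + i)) = gs_term (a, lam) * P ^ i"
proof -
  have fin: "finite {Q. lam Q \<noteq> 0}" using assms(1) by simp
  then show product: "gs_term (a, lam(P := lam P + i)) = gs_term (a, lam) * P ^ i"
    by (simp add: Qpow_update)
  have supp: "{Q. (lam(P := lam P + i)) Q \<noteq> 0} \<subseteq> insert P {Q. lam Q \<noteq> 0}" by auto
  then have "finite {Q. (lam(P := lam P + i)) Q \<noteq> 0}"
    using fin by (meson finite_insert finite_subset)
  moreover have "{Q. (lam(P := lam P + i)) Q \<noteq> 0} \<subseteq> QS"
    using supp assms(1,2) by auto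
  moreover have "\<forall>Q. (lam(P := lam P + i)) Q \<noteq> 0 \<longrightarrow> degree Q \<le> max d (degree P)"
    using assms(1) by (auto simp: le_max_iff_disj)
  moreover have "c + v (P ^ i) \<le> v (gs_term (a, lam) * P ^ i)" if "gs_term (a, lam) * P ^ i \<noteq> 0"
    using that assms by (simp add: v_mult del: gs_term.simps)
  ultimately show "gs_admissible QS (c + v (P ^ i)) (max d (degree P)) (a, lam(P := lam P + i))"
    unfolding gs_admissible.simps product by blast
qed

lemma gs_expansion_mult_power:
  assumes "gs_expansion QS c d f" "P \<in> QS" "P \<noteq> 0"
  shows "gs_expansion QS (c + v (P ^ i)) (max d (degree P)) (f * P ^ i)"
proof -
  obtain ts where ts: "\<forall>t\<in>set ts. gs_admissible QS c d t" and f: "f = sum_list (map gs_term ts)"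
    using assms(1) unfolding gs_expansion_def by blast
  define ts' where "ts' = map (\<lambda>(a, lam). (a, lam(P := lam P + i))) ts"
  have "gs_term t * P ^ i = gs_term ((\<lambda>(a, lam). (a, lam(P := lam P + i))) t)" if "t \<in> set ts" for t
  proof -
    obtain a lam where t: "t = (a, lam)" by fastforce
    have "gs_admissible QS c d (a, lam)" using that ts t by blast
    from gs_admissible_mult_power(2)[OF this assms(2,3)] show ?thesis by (simp add: t)
  qed
  then have "f * P ^ i = sum_list (map gs_term ts')"
    unfolding f ts'_def by (simp add: sum_list_mult_const[symmetric] cong: map_cong)
  moreover have "\<forall>t\<in>set ts'. gs_admissible QS (c + v (P ^ i)) (max d (degree P)) t"
    using ts gs_admissible_mult_power(1)[OF _ assms(2,3)] unfolding ts'_def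
    by (auto simp del: gs_admissible.simps)
  ultimately show ?thesis unfolding gs_expansion_def by blast
qed

lemma complete_set_imp_gs_expansion:
  assumes complete: "complete_set \<nu> QS" and key: "\<forall>Q\<in>QS. key_polynomial \<nu> Q"
  shows "f \<noteq> 0 \<Longrightarrow> gs_expansion QS (v f) (degree f) f"
proof (induction "degree f" arbitrary: f rule: less_induct)
  case less
  show ?case
  proof (cases "degree f = 0")
    case True
    then have "f = gs_term (coeff f 0, \<lambda>_. 0)" by (simp add: Qpow_def degree_0_id)
    then show ?thesis unfolding gs_expansion_def
      by (intro exI[of _ "[(coeff f 0, \<lambda>_. 0)]"]) auto
  next
    case False
    then have "1 \<le> degree f" by simp
    then obtain Q where Q: "Q \<in> QS" "degree Q \<le> degree f" "nu_Q \<nu> Q f = \<nu> f"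
      using complete unfolding complete_set_def by blast
    have Q1: "1 \<le> degree Q" using key Q(1) unfolding key_polynomial_def by auto
    then have Q0: "Q \<noteq> 0" by auto
    have bound: "nu_Q_ge Q (v f) f" using Q(3) nu_Q_eq_iff_nu_Q_ge[OF Q1 less.prems] by simp
    have "gs_expansion QS (v f) (degree f) (qexp_coeff Q f j * Q ^ j)" for j
    proof (cases "qexp_coeff Q f j = 0")
      case True
      then show ?thesis by (simp add: gs_expansion_0)
    next
      case False
      define b where "b = qexp_coeff Q f j"
      have b: "b \<noteq> 0" "degree b < degree Q"
        using False degree_qexp_coeff_less[OF Q0] by (auto simp: b_def)
      then have "gs_expansion QS (v b) (degree b) b" using less.hyps Q(2) by simp
      then have "gs_expansion QS (v b + v (Q ^ j)) (max (degree b) (degree Q)) (b * Q ^ j)"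
        using Q(1) Q0 by (rule gs_expansion_mult_power)
      moreover have "v f \<le> v b + v (Q ^ j)"
        using bound b Q0 by (simp add: nu_Q_ge_def b_def v_mult)
      ultimately show ?thesis
        using gs_expansion_mono b Q(2) by (simp add: b_def)
    qed
    then have "gs_expansion QS (v f) (degree f) (\<Sum>j\<le>degree f. qexp_coeff Q f j * Q ^ j)"
      by (intro gs_expansion_sum)
    then show ?thesis by (simp only: qexp_expansion[OF Q1, of f, symmetric])
  qed
qed

lemma GS1_star_if_gs_expansion:
  assumes "\<And>f. f \<noteq> 0 \<Longrightarrow> gs_expansion QS (v f) (degree f) f"
  shows "GS1_star \<nu> QS"
  unfolding GS1_star_def
proof
  fix f :: "'a poly"
  show "\<exists>(r::nat) (a::nat \<Rightarrow> 'a) (lam::nat \<Rightarrow> 'a poly \<Rightarrow> nat).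
      (\<forall>i<r. finite {Q. lam i Q \<noteq> 0} \<and> {Q. lam i Q \<noteq> 0} \<subseteq> QS) \<and>
      f = (\<Sum>i<r. smult (a i) (Qpow (lam i))) \<and>
      (\<forall>i<r. vle (\<nu> f) (\<nu> (smult (a i) (Qpow (lam i))))) \<and>
      (\<forall>i<r. \<forall>Q. lam i Q \<noteq> 0 \<longrightarrow> degree Q \<le> degree f)"
  proof (cases "f = 0")
    case True
    then show ?thesis by (intro exI[of _ "0::nat"]) auto
  next
    case False
    then obtain ts where ts: "\<forall>t\<in>set ts. gs_admissible QS (v f) (degree f) t"
      and f: "f = sum_list (map gs_term ts)"
      using assms unfolding gs_expansion_def by blast
    define a where "a i = fst (ts ! i)" for i
    define lam where "lam i = snd (ts ! i)" for i
    have adm: "gs_admissible QS (v f) (degree f) (a i, lam i)" if "i < length ts" for i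
      using ts that by (simp add: a_def lam_def)
    have "vle (\<nu> f) (\<nu> (gs_term (a i, lam i)))" if "i < length ts" for i
      using adm[OF that] nu_eq_Some[OF False] nu_eq_Some[of "gs_term (a i, lam i)"]
      by (cases "gs_term (a i, lam i) = 0") (auto simp: vle_def simp del: gs_term.simps)
    moreover have "f = (\<Sum>i<length ts. gs_term (a i, lam i))"
      unfolding f sum_list_sum_nth by (simp add: atLeast0LessThan a_def lam_def)
    ultimately show ?thesis
    proof (intro exI[of _ "length ts"] exI[of _ a] exI[of _ lam] conjI allI impI)
      fix i assume "i < length ts"
      then show "finite {Q. lam i Q \<noteq> 0}" "{Q. lam i Q \<noteq> 0} \<subseteq> QS"
        "\<And>Q. lam i Q \<noteq> 0 \<Longrightarrow> degree Q \<le> degree f"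
        using adm[of i] by auto
    qed auto
  qed
qed

text \<open>Choose \<open>Q\<close> of maximal degree in \<open>A\<close> and, among those, of maximal value.\<close>

lemma exists_key_polynomial_nu_Q_ge:
  assumes "finite A" "A \<noteq> {}" and key: "\<And>P. P \<in> A \<Longrightarrow> key_polynomial \<nu> P"
  obtains Q where "Q \<in> A" "\<And>P. P \<in> A \<Longrightarrow> nu_Q_ge Q (v P) P"
proof -
  define B where "B = {P \<in> A. degree P = Max (degree ` A)}"
  have "Max (degree ` A) \<in> degree ` A" using assms(1,2) by (intro Max_in) auto
  then have B: "finite B" "B \<noteq> {}" using assms(1) by (auto simp: B_def)
  then have "Max (v ` B) \<in> v ` B" by (intro Max_in) auto
  then obtain Q where Q: "Q \<in> B" "v Q = Max (v ` B)" by auto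
  have "nu_Q_ge Q (v P) P" if P: "P \<in> A" for P
  proof (cases "degree P < degree Q")
    case True
    then show ?thesis by (rule nu_Q_ge_of_degree_less)
  next
    case False
    then have "P \<in> B" using P Q(1) assms(1) by (auto simp: B_def intro: antisym)
    then have "v P \<le> v Q" using Q(2) B(1) by simp
    moreover have "degree P = degree Q" using \<open>P \<in> B\<close> Q(1) by (simp add: B_def)
    moreover have "lead_coeff P = 1" using key[OF P] by (simp add: key_polynomial_def)
    moreover have "1 \<le> degree Q" "lead_coeff Q = 1"
      using key[of Q] Q(1) unfolding B_def key_polynomial_def by blast+
    ultimately show ?thesis by (intro nu_Q_ge_of_monic_same_degree)
  qed
  then show thesis using that Q(1) by (auto simp: B_def)
qed

lemma gs_expansion_imp_nu_Q_eq:
  assumes key: "\<forall>Q\<in>QS. key_polynomial \<nu> Q"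
    and f: "1 \<le> degree f" "gs_expansion QS (v f) (degree f) f"
  shows "\<exists>Q\<in>QS. degree Q \<le> degree f \<and> nu_Q \<nu> Q f = \<nu> f"
proof -
  obtain ts where ts: "\<forall>t\<in>set ts. gs_admissible QS (v f) (degree f) t"
    and sum: "f = sum_list (map gs_term ts)"
    using f(2) unfolding gs_expansion_def by blast
  define A where "A = (\<Union>t\<in>set ts. {Q. snd t Q \<noteq> 0})"
  have A: "finite A" "A \<subseteq> QS" "\<And>P. P \<in> A \<Longrightarrow> degree P \<le> degree f"
    using ts by (force simp: A_def)+
  have "A \<noteq> {}"
  proof
    assume "A = {}"
    then have "degree (gs_term t) = 0" if "t \<in> set ts" for t
      using that by (cases t) (auto simp: A_def Qpow_def)
    then have "degree (sum_list (map gs_term ts)) \<le> 0"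
      by (intro degree_sum_list_le) auto
    then show False using f(1) sum by simp
  qed
  then obtain Q where Q: "Q \<in> A" and base: "\<And>P. P \<in> A \<Longrightarrow> nu_Q_ge Q (v P) P"
    using exists_key_polynomial_nu_Q_ge A(1,2) key by blast
  have keyQ: "key_polynomial \<nu> Q" using Q A key by blast
  then have Q1: "1 \<le> degree Q" by (simp add: key_polynomial_def)
  have "P \<noteq> 0 \<and> nu_Q_ge Q (v P) P" if "t \<in> set ts" "snd t P \<noteq> 0" for t P
  proof -
    have "P \<in> A" using that by (auto simp: A_def)
    moreover from this have "key_polynomial \<nu> P" using A key by blast
    ultimately show ?thesis using base by (auto simp: key_polynomial_def)
  qed
  then have "nu_Q_ge Q (v f) (sum_list (map gs_term ts))"
    by (rule nu_Q_ge_sum_gs_terms[OF keyQ ts])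
  then have "nu_Q_ge Q (v f) f" by (simp only: sum[symmetric])
  moreover have "f \<noteq> 0" using f(1) by auto
  ultimately have "nu_Q \<nu> Q f = \<nu> f" using nu_Q_eq_iff_nu_Q_ge[OF Q1] by blast
  moreover have "Q \<in> QS" "degree Q \<le> degree f" using Q A by auto
  ultimately show ?thesis by blast
qed

lemma complete_set_iff_gs_expansion:
  assumes "\<forall>Q\<in>QS. key_polynomial \<nu> Q"
  shows "complete_set \<nu> QS \<longleftrightarrow> (\<forall>f. f \<noteq> 0 \<longrightarrow> gs_expansion QS (v f) (degree f) f)"
proof (intro iffI allI impI)
  show "gs_expansion QS (v f) (degree f) f" if "complete_set \<nu> QS" "f \<noteq> 0" for f
    using complete_set_imp_gs_expansion[OF that(1) assms that(2)] .
next
  assume expansions: "\<forall>f. f \<noteq> 0 \<longrightarrow> gs_expansion QS (v f) (degree f) f"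
  show "complete_set \<nu> QS"
    unfolding complete_set_def
  proof (intro allI impI)
    fix f :: "'a poly" assume f: "1 \<le> degree f"
    then have "f \<noteq> 0" by auto
    then show "\<exists>Q\<in>QS. degree Q \<le> degree f \<and> nu_Q \<nu> Q f = \<nu> f"
      using gs_expansion_imp_nu_Q_eq[OF assms f] expansions by blast
  qed
qed

lemma GS1_star_iff_gs_expansion:
  "GS1_star \<nu> QS \<longleftrightarrow> (\<forall>f. f \<noteq> 0 \<longrightarrow> gs_expansion QS (v f) (degree f) f)"
proof
  assume GS1: "GS1_star \<nu> QS"
  show "\<forall>f. f \<noteq> 0 \<longrightarrow> gs_expansion QS (v f) (degree f) f"
  proof (intro allI impI)
    fix f :: "'a poly" assume f: "f \<noteq> 0"
    obtain r and a :: "nat \<Rightarrow> 'a" and lam :: "nat \<Rightarrow> 'a poly \<Rightarrow> nat" where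
      supp: "\<forall>i<r. finite {Q. lam i Q \<noteq> 0} \<and> {Q. lam i Q \<noteq> 0} \<subseteq> QS"
      and sum: "f = (\<Sum>i<r. smult (a i) (Qpow (lam i)))"
      and val: "\<forall>i<r. vle (\<nu> f) (\<nu> (smult (a i) (Qpow (lam i))))"
      and deg: "\<forall>i<r. \<forall>Q. lam i Q \<noteq> 0 \<longrightarrow> degree Q \<le> degree f"
      using GS1 unfolding GS1_star_def by blast
    define ts where "ts = map (\<lambda>i. (a i, lam i)) [0..<r]"
    have "gs_admissible QS (v f) (degree f) (a i, lam i)" if i: "i < r" for i
    proof -
      have "v f \<le> v (smult (a i) (Qpow (lam i)))" if "smult (a i) (Qpow (lam i)) \<noteq> 0"
        using val i f that by (auto simp: vle_def nu_eq_Some)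
      then show ?thesis using supp deg i by simp
    qed
    then have "\<forall>t\<in>set ts. gs_admissible QS (v f) (degree f) t" by (auto simp: ts_def)
    moreover have "f = sum_list (map gs_term ts)"
      unfolding sum ts_def by (simp add: interv_sum_list_conv_sum_set_nat atLeast0LessThan)
    ultimately show "gs_expansion QS (v f) (degree f) f"
      unfolding gs_expansion_def by blast
  qed
qed (rule GS1_star_if_gs_expansion, blast)

end

theorem theorem1p2:
  fixes \<nu> :: "'a::field poly \<Rightarrow> 'g::linordered_ab_group_add option"
    and QS :: "'a poly set"
  assumes "is_valuation \<nu>"
    and "\<forall>Q\<in>QS. key_polynomial \<nu> Q"
  shows "complete_set \<nu> QS \<longleftrightarrow> GS1_star \<nu> QS"
proof -
  interpret poly_valuation \<nu> by unfold_locales (fact assms(1))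
  show ?thesis
    using complete_set_iff_gs_expansion[OF assms(2)] GS1_star_iff_gs_expansion by simp
qed

end
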